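(* Let $\Gamma$ be a grid and let $r_1\leq r_2$. For each $i\in\{1,2\}$ let $Z_i$ be the $(r_i\times r_i)$-grid and suppose that $Z_i$ is a minor of $\Gamma$ with minor mapping $\mu_i$. Assume that $\mu_1(V(Z_1))\cap\mu_2(V(Z_2))=\emptyset$. For each $i\in\{1,2\}$ let $Y_i$ be the set of vertices in the first row of $Z_i$, for each $v\in Y_i$ pick some $q(v)\in\mu_i(v)$, and let $W_i=\{q(v): v\in Y_i\}$. Then $W_1\cup W_2$ is $1/384$-cut-linked in $\Gamma$.
   Context: The $(r\times\ell)$-grid is the Cartesian product $P_r\times P_\ell$ of paths; a grid is such a graph. If $H$ is a minor of $G$ (obtained by edge contractions, edge deletions and vertex deletions), the minor mapping $\mu:V(H)\to 2^{V(G)}$ sends each vertex of $H$ to the set of vertices of $G$ contracted into it; for $Z\subseteq V(H)$, $\mu(Z)=\bigcup_{v\in Z}\mu(v)$. A set $X\subseteq V(G)$ is $\alpha$-cut-linked in $G$ if for every partition of $V(G)$ into $\{A,B\}$ we have $|E(A,B)|\geq\alpha\cdot\min\{|A\cap X|,|B\cap X|\}$. *)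

theory Defs
  imports Complex_Main
begin

text \<open>Graphs are given by a vertex set V and a symmetric irreflexive adjacency relation E.\<close>

text \<open>The (r x l)-grid P_r x P_l: vertices (i,j) with i < r (row index), j < l (column index);
  two vertices are adjacent iff they differ by one in exactly one coordinate.\<close>
definition grid_V :: "nat \<Rightarrow> nat \<Rightarrow> (nat \<times> nat) set" where
  "grid_V r l = {0..<r} \<times> {0..<l}"

definition grid_adj :: "nat \<times> nat \<Rightarrow> nat \<times> nat \<Rightarrow> bool" where
  "grid_adj u v \<longleftrightarrow>
     (fst u = fst v \<and> (snd u = Suc (snd v) \<or> snd v = Suc (snd u))) \<or>
     (snd u = snd v \<and> (fst u = Suc (fst v) \<or> fst v = Suc (fst u)))"

definition grid_first_row :: "nat \<Rightarrow> (nat \<times> nat) set" where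
  "grid_first_row l = {(0, j) | j. j < l}"

definition induces_connected :: "'a set \<Rightarrow> ('a \<Rightarrow> 'a \<Rightarrow> bool) \<Rightarrow> 'a set \<Rightarrow> bool" where
  "induces_connected V E S \<longleftrightarrow> S \<noteq> {} \<and> S \<subseteq> V \<and>
     (\<forall>x\<in>S. \<forall>y\<in>S. (\<lambda>a b. a \<in> S \<and> b \<in> S \<and> E a b)\<^sup>*\<^sup>* x y)"

definition minor_map ::
  "'b set \<Rightarrow> ('b \<Rightarrow> 'b \<Rightarrow> bool) \<Rightarrow> 'a set \<Rightarrow> ('a \<Rightarrow> 'a \<Rightarrow> bool) \<Rightarrow> ('b \<Rightarrow> 'a set) \<Rightarrow> bool" where
  "minor_map VH EH VG EG \<mu> \<longleftrightarrow>
     (\<forall>v\<in>VH. induces_connected VG EG (\<mu> v)) \<and>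
     (\<forall>u\<in>VH. \<forall>v\<in>VH. u \<noteq> v \<longrightarrow> \<mu> u \<inter> \<mu> v = {}) \<and>
     (\<forall>u\<in>VH. \<forall>v\<in>VH. EH u v \<longrightarrow> (\<exists>x\<in>\<mu> u. \<exists>y\<in>\<mu> v. EG x y))"

definition cut_edges :: "('a \<Rightarrow> 'a \<Rightarrow> bool) \<Rightarrow> 'a set \<Rightarrow> 'a set \<Rightarrow> nat" where
  "cut_edges E A B = card {(a, b). a \<in> A \<and> b \<in> B \<and> E a b}"

definition cut_linked :: "'a set \<Rightarrow> ('a \<Rightarrow> 'a \<Rightarrow> bool) \<Rightarrow> real \<Rightarrow> 'a set \<Rightarrow> bool" where
  "cut_linked V E \<alpha> X \<longleftrightarrow> X \<subseteq> V \<and>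
     (\<forall>A B. A \<union> B = V \<and> A \<inter> B = {} \<longrightarrow>
        real (cut_edges E A B) \<ge> \<alpha> * real (min (card (A \<inter> X)) (card (B \<inter> X))))"

end

theory Submission
  imports Defs
begin

text \<open>A cut (A, B) with c edges splits at most c branch sets of a grid minor and separates at
  most c of its edges, since each such defect uses its own cut edge. So all but c rows and all but
  c columns of the minor are free of defects; each of them lies on one side, and as rows and
  columns cross, all of them lie on the same side. In particular all but c first-row
  representatives of each minor lie on that side.

  If r1 \<le> 3c, the opposite side therefore contains at most r1 + c representatives. Otherwise
  both minors are large: their sides contain at least (ri - c) ri > c^2 vertices. Sweeping a
  vertical (horizontal) cut across the host grid shows ri \<le> 3r (ri \<le> 3l), so c < min r l, and
  then one side of the cut is covered by the defective rows and columns of the host grid, hence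
  has at most c^2 vertices. So both minors lie on the same side, and the opposite side contains
  at most 2c representatives. This gives the bound with 1/4 in place of 1/384.\<close>

lemma mem_grid_V [simp]: "(i, j) \<in> grid_V r l \<longleftrightarrow> i < r \<and> j < l"
  unfolding grid_V_def by auto

lemma finite_grid_V [simp]: "finite (grid_V r l)"
  unfolding grid_V_def by auto

lemma grid_first_row_eq: "grid_first_row g = (\<lambda>j. (0, j)) ` {..<g}"
  unfolding grid_first_row_def by auto

lemma finite_grid_first_row [simp]: "finite (grid_first_row g)"
  unfolding grid_first_row_eq by simp

lemma card_grid_first_row: "card (grid_first_row g) = g"
  unfolding grid_first_row_eq by (simp add: card_image inj_on_def)

lemma finite_cut_edges_set:
  "finite A \<Longrightarrow> finite B \<Longrightarrow> finite {(a, b). a \<in> A \<and> b \<in> B \<and> E a b}"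
  by (rule finite_subset[of _ "A \<times> B"]) auto

subsection \<open>Minor maps\<close>

lemma minor_map_connected:
  "minor_map VH EH VG EG \<mu> \<Longrightarrow> v \<in> VH \<Longrightarrow> induces_connected VG EG (\<mu> v)"
  unfolding minor_map_def by blast

lemma minor_map_nonempty: "minor_map VH EH VG EG \<mu> \<Longrightarrow> v \<in> VH \<Longrightarrow> \<mu> v \<noteq> {}"
  unfolding minor_map_def induces_connected_def by blast

lemma minor_map_subset: "minor_map VH EH VG EG \<mu> \<Longrightarrow> v \<in> VH \<Longrightarrow> \<mu> v \<subseteq> VG"
  unfolding minor_map_def induces_connected_def by blast

lemma minor_map_disjoint:
  "minor_map VH EH VG EG \<mu> \<Longrightarrow> u \<in> VH \<Longrightarrow> v \<in> VH \<Longrightarrow> u \<noteq> v \<Longrightarrow> \<mu> u \<inter> \<mu> v = {}"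
  unfolding minor_map_def by blast

lemma minor_map_obtain_representatives:
  assumes "minor_map VH EH VG EG \<mu>"
  obtains q where "\<forall>v\<in>VH. q v \<in> \<mu> v"
proof
  show "\<forall>v\<in>VH. (SOME x. x \<in> \<mu> v) \<in> \<mu> v"
    using minor_map_nonempty[OF assms] by (simp add: some_in_eq)
qed

lemma inj_on_minor_map_representatives:
  assumes mm: "minor_map VH EH VG EG \<mu>" and q: "\<forall>v\<in>U. q v \<in> \<mu> v" and "U \<subseteq> VH"
  shows "inj_on q U"
proof (rule inj_onI)
  fix u v assume uv: "u \<in> U" "v \<in> U" "q u = q v"
  then have "q u \<in> \<mu> u \<inter> \<mu> v" using q by auto
  then show "u = v" using minor_map_disjoint[OF mm] uv \<open>U \<subseteq> VH\<close> by blast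
qed

lemma induces_connected_edge_leaving:
  assumes conn: "induces_connected V E S" and "x \<in> S \<inter> A" "y \<in> S - A"
  shows "\<exists>a\<in>S \<inter> A. \<exists>b\<in>S - A. E a b"
proof -
  have "z \<in> A \<or> (\<exists>a\<in>S \<inter> A. \<exists>b\<in>S - A. E a b)"
    if "(\<lambda>a b. a \<in> S \<and> b \<in> S \<and> E a b)\<^sup>*\<^sup>* x z" for z
    using that by (induction rule: rtranclp_induct) (use \<open>x \<in> S \<inter> A\<close> in auto)
  moreover have "(\<lambda>a b. a \<in> S \<and> b \<in> S \<and> E a b)\<^sup>*\<^sup>* x y"
    using conn assms(2,3) unfolding induces_connected_def by blast
  ultimately show ?thesis using \<open>y \<in> S - A\<close> by blast
qed

lemma induces_connected_image:
  assumes conn: "induces_connected V E S"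
    and hom: "\<And>a b. a \<in> V \<Longrightarrow> b \<in> V \<Longrightarrow> E a b \<Longrightarrow> E' (f a) (f b)"
  shows "induces_connected (f ` V) E' (f ` S)"
proof -
  have SV: "S \<subseteq> V" using conn unfolding induces_connected_def by blast
  have "(\<lambda>a b. a \<in> f ` S \<and> b \<in> f ` S \<and> E' a b)\<^sup>*\<^sup>* (f x) (f y)"
    if "(\<lambda>a b. a \<in> S \<and> b \<in> S \<and> E a b)\<^sup>*\<^sup>* x y" for x y
    using that
  proof (induction rule: rtranclp_induct)
    case (step y z)
    then show ?case using SV hom by (blast intro: rtranclp.rtrancl_into_rtrancl)
  qed simp
  then show ?thesis using conn unfolding induces_connected_def by blast
qed

lemma minor_map_image:
  assumes mm: "minor_map VH EH VG EG \<mu>" and inj: "inj_on f VG"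
    and hom: "\<And>a b. a \<in> VG \<Longrightarrow> b \<in> VG \<Longrightarrow> EG a b \<Longrightarrow> EG' (f a) (f b)"
  shows "minor_map VH EH (f ` VG) EG' (\<lambda>v. f ` \<mu> v)"
  unfolding minor_map_def
proof (intro conjI ballI impI)
  fix v assume "v \<in> VH"
  then show "induces_connected (f ` VG) EG' (f ` \<mu> v)"
    by (intro induces_connected_image[OF minor_map_connected[OF mm]] hom)
next
  fix u v assume uv: "u \<in> VH" "v \<in> VH" "u \<noteq> v"
  have "f ` \<mu> u \<inter> f ` \<mu> v = f ` (\<mu> u \<inter> \<mu> v)"
    by (rule inj_on_image_Int[symmetric, OF inj minor_map_subset[OF mm uv(1)] minor_map_subset[OF mm uv(2)]])
  then show "f ` \<mu> u \<inter> f ` \<mu> v = {}" using minor_map_disjoint[OF mm uv] by simp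
next
  fix u v assume uv: "u \<in> VH" "v \<in> VH" "EH u v"
  then obtain x y where "x \<in> \<mu> u" "y \<in> \<mu> v" "EG x y" using mm unfolding minor_map_def by blast
  moreover have "x \<in> VG" "y \<in> VG" using calculation minor_map_subset[OF mm] uv by blast+
  ultimately show "\<exists>x\<in>f ` \<mu> u. \<exists>y\<in>f ` \<mu> v. EG' x y" using hom by blast
qed

subsection \<open>Cuts through a minor\<close>

lemma card_le_cut_edges_if_joined:
  assumes disj: "\<forall>u\<in>VH. \<forall>v\<in>VH. u \<noteq> v \<longrightarrow> \<mu> u \<inter> \<mu> v = {}"
    and D: "D \<subseteq> VH \<times> VH"
    and joined: "\<forall>(u, v)\<in>D. \<exists>a\<in>\<mu> u \<inter> A. \<exists>b\<in>\<mu> v \<inter> B. E a b"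
    and fin: "finite A" "finite B"
  shows "card D \<le> cut_edges E A B"
proof -
  define C where "C = {(a, b). a \<in> A \<and> b \<in> B \<and> E a b}"
  have "\<forall>d\<in>D. \<exists>e\<in>C. fst e \<in> \<mu> (fst d) \<and> snd e \<in> \<mu> (snd d)"
    using joined unfolding C_def by fastforce
  then obtain f where f: "\<And>d. d \<in> D \<Longrightarrow> f d \<in> C \<and> fst (f d) \<in> \<mu> (fst d) \<and> snd (f d) \<in> \<mu> (snd d)"
    using bchoice[of D "\<lambda>d e. e \<in> C \<and> fst e \<in> \<mu> (fst d) \<and> snd e \<in> \<mu> (snd d)"] by blast
  have "inj_on f D"
  proof (rule inj_onI)
    fix d d' assume d: "d \<in> D" "d' \<in> D" and eq: "f d = f d'"
    have "fst (f d) \<in> \<mu> (fst d) \<inter> \<mu> (fst d')" "snd (f d) \<in> \<mu> (snd d) \<inter> \<mu> (snd d')"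
      using f[OF d(1)] f[OF d(2)] eq by auto
    moreover have "fst d \<in> VH" "fst d' \<in> VH" "snd d \<in> VH" "snd d' \<in> VH" using d D by auto
    ultimately have "fst d = fst d'" "snd d = snd d'" using disj by blast+
    then show "d = d'" by (rule prod_eqI)
  qed
  moreover have "f ` D \<subseteq> C" using f by blast
  moreover have "finite C" unfolding C_def by (rule finite_cut_edges_set[OF fin])
  ultimately show ?thesis unfolding cut_edges_def C_def[symmetric] by (rule card_inj_on_le)
qed

text \<open>Each defect of a cut through a minor -- a branch set meeting both sides, recorded as a
  diagonal pair, or an edge of the minor between branch sets on opposite sides -- is witnessed by
  its own edge of the cut.\<close>

definition minor_cut_defects ::
  "'b set \<Rightarrow> ('b \<Rightarrow> 'b \<Rightarrow> bool) \<Rightarrow> ('b \<Rightarrow> 'a set) \<Rightarrow> 'a set \<Rightarrow> 'a set \<Rightarrow> ('b \<times> 'b) set" where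
  "minor_cut_defects VH EH \<mu> A B =
     {(v, v) | v. v \<in> VH \<and> \<mu> v \<inter> A \<noteq> {} \<and> \<mu> v \<inter> B \<noteq> {}} \<union>
     {(u, v). u \<in> VH \<and> v \<in> VH \<and> EH u v \<and> \<mu> u \<subseteq> A \<and> \<mu> v \<subseteq> B}"

lemma minor_cut_defects_subset: "minor_cut_defects VH EH \<mu> A B \<subseteq> VH \<times> VH"
  unfolding minor_cut_defects_def by auto

lemma card_minor_cut_defects_le:
  assumes mm: "minor_map VH EH VG EG \<mu>"
    and part: "A \<union> B = VG" "A \<inter> B = {}" and fin: "finite VG"
  shows "card (minor_cut_defects VH EH \<mu> A B) \<le> cut_edges EG A B"
proof (rule card_le_cut_edges_if_joined)
  show "\<forall>u\<in>VH. \<forall>v\<in>VH. u \<noteq> v \<longrightarrow> \<mu> u \<inter> \<mu> v = {}"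
    using minor_map_disjoint[OF mm] by blast
  show "finite A" "finite B" using fin part by (metis finite_Un)+
  show "\<forall>(u, v)\<in>minor_cut_defects VH EH \<mu> A B. \<exists>a\<in>\<mu> u \<inter> A. \<exists>b\<in>\<mu> v \<inter> B. EG a b"
  proof (clarify)
    fix u v assume "(u, v) \<in> minor_cut_defects VH EH \<mu> A B"
    then consider "u = v" "v \<in> VH" "\<mu> v \<inter> A \<noteq> {}" "\<mu> v \<inter> B \<noteq> {}"
      | "u \<in> VH" "v \<in> VH" "EH u v" "\<mu> u \<subseteq> A" "\<mu> v \<subseteq> B"
      unfolding minor_cut_defects_def by blast
    then show "\<exists>a\<in>\<mu> u \<inter> A. \<exists>b\<in>\<mu> v \<inter> B. EG a b"
    proof cases
      case 1
      then obtain x y where "x \<in> \<mu> v \<inter> A" "y \<in> \<mu> v - A" using part by blast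
      from induces_connected_edge_leaving[OF minor_map_connected[OF mm \<open>v \<in> VH\<close>] this]
      show ?thesis using 1 minor_map_subset[OF mm \<open>v \<in> VH\<close>] part by blast
    next
      case 2
      then show ?thesis using mm unfolding minor_map_def by blast
    qed
  qed
qed (rule minor_cut_defects_subset)

lemma minor_cut_defects_pure:
  assumes mm: "minor_map VH EH VG EG \<mu>" and part: "A \<union> B = VG" "A \<inter> B = {}"
    and v: "v \<in> VH" "(v, v) \<notin> minor_cut_defects VH EH \<mu> A B"
  shows "\<mu> v \<subseteq> B \<longleftrightarrow> \<not> \<mu> v \<subseteq> A"
proof -
  have "\<not> (\<mu> v \<inter> A \<noteq> {} \<and> \<mu> v \<inter> B \<noteq> {})"
    using v unfolding minor_cut_defects_def by blast
  moreover have "\<mu> v \<noteq> {}" "\<mu> v \<subseteq> A \<union> B"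
    using minor_map_nonempty[OF mm v(1)] minor_map_subset[OF mm v(1)] part by auto
  ultimately show ?thesis using part(2) by blast
qed

lemma minor_cut_defects_same_side:
  assumes mm: "minor_map VH EH VG EG \<mu>" and part: "A \<union> B = VG" "A \<inter> B = {}"
    and uv: "u \<in> VH" "v \<in> VH" "EH u v" "EH v u"
    and no_defect: "\<And>x y. x \<in> {u, v} \<Longrightarrow> y \<in> {u, v} \<Longrightarrow> (x, y) \<notin> minor_cut_defects VH EH \<mu> A B"
  shows "\<mu> u \<subseteq> A \<longleftrightarrow> \<mu> v \<subseteq> A"
proof -
  have "\<mu> u \<subseteq> B \<longleftrightarrow> \<not> \<mu> u \<subseteq> A" "\<mu> v \<subseteq> B \<longleftrightarrow> \<not> \<mu> v \<subseteq> A"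
    using minor_cut_defects_pure[OF mm part uv(1) no_defect]
      minor_cut_defects_pure[OF mm part uv(2) no_defect] by simp_all
  moreover have "(u, v) \<notin> minor_cut_defects VH EH \<mu> A B" "(v, u) \<notin> minor_cut_defects VH EH \<mu> A B"
    using no_defect by simp_all
  then have "\<not> (\<mu> u \<subseteq> A \<and> \<mu> v \<subseteq> B)" "\<not> (\<mu> v \<subseteq> A \<and> \<mu> u \<subseteq> B)"
    using uv unfolding minor_cut_defects_def by auto
  ultimately show ?thesis by blast
qed

lemma grid_adj_Suc [simp]:
  "grid_adj (i, j) (i, Suc j)" "grid_adj (i, Suc j) (i, j)"
  "grid_adj (i, j) (Suc i, j)" "grid_adj (Suc i, j) (i, j)"
  unfolding grid_adj_def by simp_all

lemma eq_zero_if_Suc_eq: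
  assumes step: "\<And>j. Suc j < h \<Longrightarrow> P (Suc j) \<longleftrightarrow> P j" and "j < h"
  shows "P j \<longleftrightarrow> P 0"
  using \<open>j < h\<close>
proof (induction j)
  case (Suc j)
  then have "j < h" by simp
  then show ?case using Suc.IH step[OF Suc.prems] by simp
qed simp

lemma grid_cross_const:
  assumes row: "\<forall>i\<in>G. \<forall>j<h. P (i, j) \<longleftrightarrow> P (i, 0)"
    and col: "\<forall>j\<in>H. \<forall>i<g. P (i, j) \<longleftrightarrow> P (0, j)"
    and GH: "G \<subseteq> {..<g}" "H \<subseteq> {..<h}" "i0 \<in> G" "j0 \<in> H"
    and ij: "i < g" "j < h" "i \<in> G \<or> j \<in> H"
  shows "P (i, j) \<longleftrightarrow> P (i0, j0)"
proof -
  have "i0 < g" "j0 < h" using GH by auto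
  have "P (i0, j) \<longleftrightarrow> P (i0, 0)" "P (i0, j0) \<longleftrightarrow> P (i0, 0)"
    using row GH(3) \<open>j < h\<close> \<open>j0 < h\<close> by blast+
  moreover have "P (i, j0) \<longleftrightarrow> P (0, j0)" "P (i0, j0) \<longleftrightarrow> P (0, j0)"
    using col GH(4) \<open>i < g\<close> \<open>i0 < g\<close> by blast+
  moreover have "P (i, j) \<longleftrightarrow> P (i, 0)" "P (i, j0) \<longleftrightarrow> P (i, 0)" if "i \<in> G"
    using row that \<open>j < h\<close> \<open>j0 < h\<close> by blast+
  moreover have "P (i, j) \<longleftrightarrow> P (0, j)" "P (i0, j) \<longleftrightarrow> P (0, j)" if "j \<in> H"
    using col that \<open>i < g\<close> \<open>i0 < g\<close> by blast+
  ultimately show ?thesis using ij(3) by blast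
qed

lemma card_lessThan_diff_image_ge: "finite D \<Longrightarrow> g \<le> card ({..<g} - f ` D) + card D"
  using diff_card_le_card_Diff[of "f ` D" "{..<g}"] card_image_le[of D f] by simp

definition grid_minor_side :: "(nat \<times> nat \<Rightarrow> 'a set) \<Rightarrow> nat \<Rightarrow> nat \<Rightarrow> nat \<Rightarrow> 'a set \<Rightarrow> bool" where
  "grid_minor_side \<mu> g h c S \<longleftrightarrow>
     (\<exists>G\<subseteq>{..<g}. g \<le> card G + c \<and> (\<forall>i\<in>G. \<forall>j<h. \<mu> (i, j) \<subseteq> S)) \<and>
     (\<exists>H\<subseteq>{..<h}. h \<le> card H + c \<and> (\<forall>j\<in>H. \<forall>i<g. \<mu> (i, j) \<subseteq> S))"

lemma grid_minor_row_same_side: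
  assumes mm: "minor_map (grid_V g h) grid_adj V E \<mu>" and part: "A \<union> B = V" "A \<inter> B = {}"
    and i: "i < g" "i \<notin> (\<lambda>d. fst (fst d)) ` minor_cut_defects (grid_V g h) grid_adj \<mu> A B"
    and "j < h"
  shows "\<mu> (i, j) \<subseteq> A \<longleftrightarrow> \<mu> (i, 0) \<subseteq> A"
proof (rule eq_zero_if_Suc_eq[where P = "\<lambda>j. \<mu> (i, j) \<subseteq> A", OF _ \<open>j < h\<close>])
  fix k assume "Suc k < h"
  then show "\<mu> (i, Suc k) \<subseteq> A \<longleftrightarrow> \<mu> (i, k) \<subseteq> A"
    using i by (intro minor_cut_defects_same_side[OF mm part]) (auto intro: rev_image_eqI)
qed

lemma grid_minor_col_same_side:
  assumes mm: "minor_map (grid_V g h) grid_adj V E \<mu>" and part: "A \<union> B = V" "A \<inter> B = {}"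
    and j: "j < h" "j \<notin> (\<lambda>d. snd (fst d)) ` minor_cut_defects (grid_V g h) grid_adj \<mu> A B"
    and "i < g"
  shows "\<mu> (i, j) \<subseteq> A \<longleftrightarrow> \<mu> (0, j) \<subseteq> A"
proof (rule eq_zero_if_Suc_eq[where P = "\<lambda>i. \<mu> (i, j) \<subseteq> A", OF _ \<open>i < g\<close>])
  fix k assume "Suc k < g"
  then show "\<mu> (Suc k, j) \<subseteq> A \<longleftrightarrow> \<mu> (k, j) \<subseteq> A"
    using j by (intro minor_cut_defects_same_side[OF mm part]) (auto intro: rev_image_eqI)
qed

lemma grid_minor_side_exists:
  assumes mm: "minor_map (grid_V g h) grid_adj V E \<mu>"
    and part: "A \<union> B = V" "A \<inter> B = {}" and fin: "finite V"
    and small: "cut_edges E A B < g" "cut_edges E A B < h"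
  shows "grid_minor_side \<mu> g h (cut_edges E A B) A \<or> grid_minor_side \<mu> g h (cut_edges E A B) B"
proof -
  define c where "c = cut_edges E A B"
  define D where "D = minor_cut_defects (grid_V g h) grid_adj \<mu> A B"
  define G where "G = {..<g} - (\<lambda>d. fst (fst d)) ` D"
  define H where "H = {..<h} - (\<lambda>d. snd (fst d)) ` D"
  have "finite D" unfolding D_def by (rule finite_subset[OF minor_cut_defects_subset]) simp
  moreover have "card D \<le> c"
    unfolding D_def c_def by (rule card_minor_cut_defects_le[OF mm part fin])
  ultimately have card_GH: "g \<le> card G + c" "h \<le> card H + c"
    using card_lessThan_diff_image_ge[of D] unfolding G_def H_def by (meson add_left_mono le_trans)+
  have GH: "G \<subseteq> {..<g}" "H \<subseteq> {..<h}" unfolding G_def H_def by auto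
  have row: "\<forall>i\<in>G. \<forall>j<h. \<mu> (i, j) \<subseteq> A \<longleftrightarrow> \<mu> (i, 0) \<subseteq> A"
    using grid_minor_row_same_side[OF mm part] unfolding G_def D_def by blast
  have col: "\<forall>j\<in>H. \<forall>i<g. \<mu> (i, j) \<subseteq> A \<longleftrightarrow> \<mu> (0, j) \<subseteq> A"
    using grid_minor_col_same_side[OF mm part] unfolding H_def D_def by blast
  have "G \<noteq> {}" "H \<noteq> {}" using card_GH small unfolding c_def by auto
  then obtain i0 j0 where ij0: "i0 \<in> G" "j0 \<in> H" by blast
  define S where "S = (if \<mu> (i0, j0) \<subseteq> A then A else B)"
  have "\<mu> (i, j) \<subseteq> S" if "i < g" "j < h" "i \<in> G \<or> j \<in> H" for i j
  proof -
    have "((i, j), (i, j)) \<notin> D" using that unfolding G_def H_def by (force intro: rev_image_eqI)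
    then have "\<mu> (i, j) \<subseteq> B \<longleftrightarrow> \<not> \<mu> (i, j) \<subseteq> A"
      using that unfolding D_def by (intro minor_cut_defects_pure[OF mm part]) auto
    then show ?thesis
      using grid_cross_const[OF row col GH ij0 that] unfolding S_def by auto
  qed
  then have "grid_minor_side \<mu> g h c S"
    unfolding grid_minor_side_def using GH card_GH by blast
  then show ?thesis unfolding S_def c_def by presburger
qed

lemma grid_minor_side_card_le:
  assumes mm: "minor_map (grid_V g h) grid_adj V E \<mu>"
    and side: "grid_minor_side \<mu> g h c S" and "finite S"
  shows "(g - c) * h \<le> card S"
proof -
  obtain G where G: "G \<subseteq> {..<g}" "g \<le> card G + c" "\<forall>i\<in>G. \<forall>j<h. \<mu> (i, j) \<subseteq> S"
    using side unfolding grid_minor_side_def by blast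
  obtain q where q: "\<forall>v\<in>grid_V g h. q v \<in> \<mu> v"
    by (rule minor_map_obtain_representatives[OF mm])
  have sub: "G \<times> {..<h} \<subseteq> grid_V g h" using G(1) unfolding grid_V_def by auto
  have "inj_on q (G \<times> {..<h})"
    using sub q by (intro inj_on_minor_map_representatives[OF mm]) auto
  moreover have "q ` (G \<times> {..<h}) \<subseteq> S" using sub q G(3) by fastforce
  ultimately have "card (G \<times> {..<h}) \<le> card S" using card_inj_on_le \<open>finite S\<close> by blast
  have "(g - c) * h \<le> card G * h" using G(2) by (intro mult_le_mono1) linarith
  also have "\<dots> = card (G \<times> {..<h})" by (simp add: card_cartesian_product)
  also have "\<dots> \<le> card S" by fact
  finally show ?thesis .
qed

lemma minor_map_id: "minor_map V E V E (\<lambda>v. {v})"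
  unfolding minor_map_def induces_connected_def by auto

lemma grid_cut_small_side:
  assumes part: "A \<union> B = grid_V r l" "A \<inter> B = {}"
    and small: "cut_edges grid_adj A B < r" "cut_edges grid_adj A B < l"
  shows "card A \<le> cut_edges grid_adj A B * cut_edges grid_adj A B
    \<or> card B \<le> cut_edges grid_adj A B * cut_edges grid_adj A B"
proof -
  define c where "c = cut_edges grid_adj A B"
  have compl_card: "card (grid_V r l - S) \<le> c * c" if side: "grid_minor_side (\<lambda>v. {v}) r l c S" for S
  proof -
    obtain G H where G: "G \<subseteq> {..<r}" "r \<le> card G + c" "\<forall>i\<in>G. \<forall>j<l. {(i, j)} \<subseteq> S"
      and H: "H \<subseteq> {..<l}" "l \<le> card H + c" "\<forall>j\<in>H. \<forall>i<r. {(i, j)} \<subseteq> S"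
      using side unfolding grid_minor_side_def by (elim conjE exE) (rule that; assumption)
    have "grid_V r l - S \<subseteq> ({..<r} - G) \<times> ({..<l} - H)"
    proof
      fix v assume v: "v \<in> grid_V r l - S"
      obtain i j where "v = (i, j)" by (cases v)
      then show "v \<in> ({..<r} - G) \<times> ({..<l} - H)" using v G(3) H(3) by auto
    qed
    then have "card (grid_V r l - S) \<le> card (({..<r} - G) \<times> ({..<l} - H))"
      by (rule card_mono[rotated]) simp
    also have "\<dots> = card ({..<r} - G) * card ({..<l} - H)" by (rule card_cartesian_product)
    also have "\<dots> \<le> c * c"
      using G(2) H(2) card_Diff_subset[OF finite_subset[OF G(1)] G(1)]
        card_Diff_subset[OF finite_subset[OF H(1)] H(1)]
      by (intro mult_le_mono) simp_all
    finally show ?thesis .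
  qed
  have "grid_V r l - A = B" "grid_V r l - B = A" using part by auto
  moreover have "grid_minor_side (\<lambda>v. {v}) r l c A \<or> grid_minor_side (\<lambda>v. {v}) r l c B"
    unfolding c_def by (rule grid_minor_side_exists[OF minor_map_id part finite_grid_V small])
  ultimately show ?thesis using compl_card unfolding c_def[symmetric] by metis
qed

subsection \<open>Size of a grid minor\<close>

lemma cut_edges_grid_columns_le:
  "cut_edges grid_adj {v \<in> grid_V r l. snd v < x} {v \<in> grid_V r l. x \<le> snd v} \<le> r"
proof -
  define A where "A = {v \<in> grid_V r l. snd v < x}"
  define B where "B = {v \<in> grid_V r l. x \<le> snd v}"
  have "{(a, b). a \<in> A \<and> b \<in> B \<and> grid_adj a b} \<subseteq> (\<lambda>i. ((i, x - 1), (i, x))) ` {..<r}"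
  proof clarify
    fix a1 a2 b1 b2
    assume "(a1, a2) \<in> A" "(b1, b2) \<in> B" "grid_adj (a1, a2) (b1, b2)"
    then have "a1 < r" "b1 = a1" "b2 = x" "a2 = x - 1" unfolding A_def B_def grid_adj_def by auto
    then show "((a1, a2), (b1, b2)) \<in> (\<lambda>i. ((i, x - 1), (i, x))) ` {..<r}" by auto
  qed
  then have "cut_edges grid_adj A B \<le> card ((\<lambda>i. ((i, x - 1), (i, x))) ` {..<r})"
    unfolding cut_edges_def by (rule card_mono[rotated]) simp
  also have "\<dots> \<le> r" using card_image_le[of "{..<r}"] by simp
  finally show ?thesis unfolding A_def B_def .
qed

lemma first_row_column_cut_dichotomy:
  fixes x :: nat
  assumes mm: "minor_map (grid_V g g) grid_adj (grid_V r l) grid_adj \<mu>"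
    and q: "\<forall>j<g. q (0, j) \<in> \<mu> (0, j)" and "r < g"
  defines "N \<equiv> card {j\<in>{..<g}. snd (q (0, j)) < x}"
  shows "N \<le> r \<or> g \<le> N + r"
proof -
  define A where "A = {v \<in> grid_V r l. snd v < x}"
  define B where "B = {v \<in> grid_V r l. x \<le> snd v}"
  have part: "A \<union> B = grid_V r l" "A \<inter> B = {}" unfolding A_def B_def by auto
  have cut: "cut_edges grid_adj A B \<le> r" unfolding A_def B_def by (rule cut_edges_grid_columns_le)
  then have "cut_edges grid_adj A B < g" using \<open>r < g\<close> by linarith
  from grid_minor_side_exists[OF mm part finite_grid_V this this]
  obtain S where S: "S = A \<or> S = B" "grid_minor_side \<mu> g g (cut_edges grid_adj A B) S" by blast
  then obtain H where H: "H \<subseteq> {..<g}" "g \<le> card H + cut_edges grid_adj A B"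
      "\<forall>j\<in>H. \<forall>i<g. \<mu> (i, j) \<subseteq> S"
    unfolding grid_minor_side_def by blast
  have qS: "q (0, j) \<in> S" if "j \<in> H" for j
    using q H that by blast
  have card_compl: "card {j\<in>{..<g}. x \<le> snd (q (0, j))} = g - N"
  proof -
    have "{j\<in>{..<g}. x \<le> snd (q (0, j))} = {..<g} - {j\<in>{..<g}. snd (q (0, j)) < x}" by auto
    moreover have "card ({..<g} - {j\<in>{..<g}. snd (q (0, j)) < x}) = g - N"
      unfolding N_def by (subst card_Diff_subset) auto
    ultimately show ?thesis by simp
  qed
  from S(1) show ?thesis
  proof
    assume "S = A"
    then have "H \<subseteq> {j\<in>{..<g}. snd (q (0, j)) < x}" using H(1) qS unfolding A_def by auto
    then have "card H \<le> N" unfolding N_def by (rule card_mono[rotated]) simp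
    then show ?thesis using H(2) cut by linarith
  next
    assume "S = B"
    then have "H \<subseteq> {j\<in>{..<g}. x \<le> snd (q (0, j))}" using H(1) qS unfolding B_def by auto
    then have "card H \<le> g - N" unfolding card_compl[symmetric] by (rule card_mono[rotated]) simp
    then show ?thesis using H(2) cut by linarith
  qed
qed

lemma card_first_row_in_column_le:
  assumes mm: "minor_map (grid_V g g) grid_adj (grid_V r l) grid_adj \<mu>"
    and q: "\<forall>j<g. q (0, j) \<in> \<mu> (0, j)"
  shows "card {j\<in>{..<g}. snd (q (0, j)) = x} \<le> r"
proof -
  let ?J = "{j\<in>{..<g}. snd (q (0, j)) = x}"
  have "inj_on (\<lambda>j. q (0, j)) ?J"
  proof (rule inj_onI)
    fix j j' assume "j \<in> ?J" "j' \<in> ?J" "q (0, j) = q (0, j')"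
    then have "\<mu> (0, j) \<inter> \<mu> (0, j') \<noteq> {}" using q by auto
    moreover have "(0, j) \<in> grid_V g g" "(0, j') \<in> grid_V g g" using \<open>j \<in> ?J\<close> \<open>j' \<in> ?J\<close> by auto
    ultimately show "j = j'" using minor_map_disjoint[OF mm] by blast
  qed
  moreover have "(\<lambda>j. q (0, j)) ` ?J \<subseteq> {..<r} \<times> {x}"
  proof (rule image_subsetI)
    fix j assume j: "j \<in> ?J"
    then have "(0, j) \<in> grid_V g g" by simp
    then have "q (0, j) \<in> grid_V r l" using q minor_map_subset[OF mm] j by blast
    then show "q (0, j) \<in> {..<r} \<times> {x}" using j by (cases "q (0, j)") auto
  qed
  ultimately have "card ?J \<le> card ({..<r} \<times> {x})" by (intro card_inj_on_le) auto
  then show ?thesis by (simp add: card_cartesian_product)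
qed

lemma grid_minor_size_le_rows:
  assumes mm: "minor_map (grid_V g g) grid_adj (grid_V r l) grid_adj \<mu>"
  shows "g \<le> 3 * r"
proof (rule ccontr)
  assume "\<not> g \<le> 3 * r"
  then have "r < g" by linarith
  obtain q where q: "\<forall>v\<in>grid_V g g. q v \<in> \<mu> v"
    by (rule minor_map_obtain_representatives[OF mm])
  then have q_row: "\<forall>j<g. q (0, j) \<in> \<mu> (0, j)" using \<open>r < g\<close> by auto
  define N where "N x = card {j\<in>{..<g}. snd (q (0, j)) < x}" for x
  \<comment> \<open>N grows by at most r per column, yet by the dichotomy it never lies strictly
    between r and g - r; crossing that gap forces g \<le> 3r.\<close>
  have N_Suc: "N (Suc x) \<le> N x + r" for x
  proof -
    have split: "{j\<in>{..<g}. snd (q (0, j)) < Suc x}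
        = {j\<in>{..<g}. snd (q (0, j)) < x} \<union> {j\<in>{..<g}. snd (q (0, j)) = x}" by auto
    have "N (Suc x) \<le> N x + card {j\<in>{..<g}. snd (q (0, j)) = x}"
      unfolding N_def split by (rule card_Un_le)
    then show ?thesis using card_first_row_in_column_le[OF mm q_row, of x] by linarith
  qed
  have "N l = g"
  proof -
    have "snd (q (0, j)) < l" if "j < g" for j
    proof -
      have "(0, j) \<in> grid_V g g" using \<open>j < g\<close> by simp
      then have "q (0, j) \<in> grid_V r l" using q minor_map_subset[OF mm] by blast
      then show ?thesis by (cases "q (0, j)") simp
    qed
    then have "{j\<in>{..<g}. snd (q (0, j)) < l} = {..<g}" by auto
    then show ?thesis unfolding N_def by simp
  qed
  define x where "x = (LEAST x. g \<le> N x + r)"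
  have x: "g \<le> N x + r" unfolding x_def by (rule LeastI[of _ l]) (simp add: \<open>N l = g\<close>)
  moreover have "N 0 = 0" unfolding N_def by simp
  ultimately obtain y where "x = Suc y" using \<open>r < g\<close> by (cases x) auto
  then have "\<not> g \<le> N y + r" using not_less_Least[of y "\<lambda>x. g \<le> N x + r"] unfolding x_def by simp
  then have "N y \<le> r"
    using first_row_column_cut_dichotomy[OF mm q_row \<open>r < g\<close>, of y] unfolding N_def by linarith
  then show False using x[unfolded \<open>x = Suc y\<close>] N_Suc[of y] \<open>\<not> g \<le> 3 * r\<close> by linarith
qed

lemma grid_adj_swap [simp]: "grid_adj (prod.swap u) (prod.swap v) \<longleftrightarrow> grid_adj u v"
  unfolding grid_adj_def by auto

lemma swap_grid_V: "prod.swap ` grid_V r l = grid_V l r"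
  unfolding grid_V_def by auto

lemma grid_minor_size_le_cols:
  assumes "minor_map (grid_V g g) grid_adj (grid_V r l) grid_adj \<mu>"
  shows "g \<le> 3 * l"
proof -
  have "minor_map (grid_V g g) grid_adj (grid_V l r) grid_adj (\<lambda>v. prod.swap ` \<mu> v)"
    using minor_map_image[OF assms, of prod.swap grid_adj] unfolding swap_grid_V by simp
  then show ?thesis by (rule grid_minor_size_le_rows)
qed

lemma first_row_representatives_subset:
  assumes mm: "minor_map (grid_V g g) EH V E \<mu>" and q: "\<forall>v\<in>grid_first_row g. q v \<in> \<mu> v"
  shows "q ` grid_first_row g \<subseteq> V"
proof (rule image_subsetI)
  fix v assume v: "v \<in> grid_first_row g"
  then have "v \<in> grid_V g g" unfolding grid_first_row_def by auto
  then show "q v \<in> V" using q v minor_map_subset[OF mm] by blast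
qed

lemma card_first_row_image_diff_le:
  assumes side: "grid_minor_side \<mu> g g c S" and q: "\<forall>v\<in>grid_first_row g. q v \<in> \<mu> v"
  shows "card (q ` grid_first_row g - S) \<le> c"
proof -
  obtain H where H: "H \<subseteq> {..<g}" "g \<le> card H + c" "\<forall>j\<in>H. \<forall>i<g. \<mu> (i, j) \<subseteq> S"
    using side unfolding grid_minor_side_def by blast
  have "q ` grid_first_row g - S \<subseteq> (\<lambda>j. q (0, j)) ` ({..<g} - H)"
  proof
    fix w assume "w \<in> q ` grid_first_row g - S"
    then obtain j where j: "j < g" "w = q (0, j)" "w \<notin> S" unfolding grid_first_row_eq by auto
    have "q (0, j) \<in> \<mu> (0, j)" using q j(1) unfolding grid_first_row_eq by auto
    then have "j \<notin> H" using H(3) j by auto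
    then show "w \<in> (\<lambda>j. q (0, j)) ` ({..<g} - H)" using j by auto
  qed
  then have "card (q ` grid_first_row g - S) \<le> card ((\<lambda>j. q (0, j)) ` ({..<g} - H))"
    by (rule card_mono[rotated]) simp
  also have "\<dots> \<le> card ({..<g} - H)" by (rule card_image_le) simp
  also have "\<dots> = g - card H" using H(1) by (simp add: card_Diff_subset finite_subset)
  finally show ?thesis using H(2) by linarith
qed

subsection \<open>Two grid minors and a cut\<close>

lemma grid_minor_sides_agree:
  assumes mm1: "minor_map (grid_V g1 g1) grid_adj (grid_V r l) grid_adj \<mu>1"
    and mm2: "minor_map (grid_V g2 g2) grid_adj (grid_V r l) grid_adj \<mu>2"
    and part: "A \<union> B = grid_V r l" "A \<inter> B = {}"
    and big: "3 * cut_edges grid_adj A B < g1" "3 * cut_edges grid_adj A B < g2"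
    and S1: "S1 = A \<or> S1 = B" "grid_minor_side \<mu>1 g1 g1 (cut_edges grid_adj A B) S1"
    and S2: "S2 = A \<or> S2 = B" "grid_minor_side \<mu>2 g2 g2 (cut_edges grid_adj A B) S2"
  shows "S1 = S2"
proof -
  define c where "c = cut_edges grid_adj A B"
  have "c < r" "c < l"
    using grid_minor_size_le_rows[OF mm1] grid_minor_size_le_cols[OF mm1] big(1)
    unfolding c_def by linarith+
  then have small: "card A \<le> c * c \<or> card B \<le> c * c"
    using grid_cut_small_side[OF part] unfolding c_def by blast
  have large: "c * c < card S"
    if "minor_map (grid_V g g) grid_adj (grid_V r l) grid_adj \<mu>" "3 * c < g"
      "S = A \<or> S = B" "grid_minor_side \<mu> g g c S" for g \<mu> S
  proof -
    have "finite S" using that(3) part by (metis finite_Un finite_grid_V)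
    have "c * c < (g - c) * g" using that(2) by (intro mult_strict_mono) auto
    also have "\<dots> \<le> card S" by (rule grid_minor_side_card_le[OF that(1,4) \<open>finite S\<close>])
    finally show ?thesis .
  qed
  have "c * c < card S1" "c * c < card S2"
    using large[OF mm1 _ S1(1)] large[OF mm2 _ S2(1)] big S1(2) S2(2) unfolding c_def by simp_all
  then show ?thesis using S1(1) S2(1) small by auto
qed

lemma min_card_Int_le_card_diff:
  assumes "X \<subseteq> A \<union> B" "A \<inter> B = {}" "S = A \<or> S = B"
  shows "min (card (A \<inter> X)) (card (B \<inter> X)) \<le> card (X - S)"
proof -
  have "X - A = B \<inter> X" "X - B = A \<inter> X" using assms(1,2) by auto
  then show ?thesis using assms(3) by auto
qed

lemma first_rows_cut_bound:
  assumes "r1 \<le> r2"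
    and mm1: "minor_map (grid_V r1 r1) grid_adj (grid_V r l) grid_adj \<mu>1"
    and mm2: "minor_map (grid_V r2 r2) grid_adj (grid_V r l) grid_adj \<mu>2"
    and q1: "\<forall>v\<in>grid_first_row r1. q1 v \<in> \<mu>1 v"
    and q2: "\<forall>v\<in>grid_first_row r2. q2 v \<in> \<mu>2 v"
    and part: "A \<union> B = grid_V r l" "A \<inter> B = {}"
  shows "min (card (A \<inter> (q1 ` grid_first_row r1 \<union> q2 ` grid_first_row r2)))
      (card (B \<inter> (q1 ` grid_first_row r1 \<union> q2 ` grid_first_row r2)))
    \<le> 4 * cut_edges grid_adj A B"
proof -
  define c where "c = cut_edges grid_adj A B"
  define W1 where "W1 = q1 ` grid_first_row r1"
  define W2 where "W2 = q2 ` grid_first_row r2"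
  have fin: "finite W1" "finite W2" unfolding W1_def W2_def by simp_all
  have card_W: "card W1 \<le> r1" "card W2 \<le> r2"
    unfolding W1_def W2_def using card_image_le[OF finite_grid_first_row] card_grid_first_row
    by metis+
  have "W1 \<union> W2 \<subseteq> A \<union> B"
    using first_row_representatives_subset[OF mm1 q1] first_row_representatives_subset[OF mm2 q2]
      part unfolding W1_def W2_def by auto
  note min_le = min_card_Int_le_card_diff[OF this part(2)]
  have "min (card (A \<inter> (W1 \<union> W2))) (card (B \<inter> (W1 \<union> W2))) \<le> 4 * c"
  proof (cases "c < r2")
    case False
    have "min (card (A \<inter> (W1 \<union> W2))) (card (B \<inter> (W1 \<union> W2))) \<le> card (W1 \<union> W2 - A)"
      by (rule min_le) simp
    also have "\<dots> \<le> card W1 + card W2"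
      using fin by (meson Diff_subset card_Un_le card_mono finite_UnI le_trans)
    finally show ?thesis using False card_W \<open>r1 \<le> r2\<close> by linarith
  next
    case True
    obtain S2 where S2: "S2 = A \<or> S2 = B" "grid_minor_side \<mu>2 r2 r2 c S2"
      using grid_minor_side_exists[OF mm2 part finite_grid_V True[unfolded c_def] True[unfolded c_def]]
      unfolding c_def by blast
    have out2: "card (W2 - S2) \<le> c" unfolding W2_def by (rule card_first_row_image_diff_le[OF S2(2) q2])
    have "card (W1 \<union> W2 - S2) \<le> 4 * c"
    proof (cases "3 * c < r1")
      case False
      have "card (W1 \<union> W2 - S2) \<le> card (W1 \<union> (W2 - S2))"
        using fin by (intro card_mono) auto
      also have "\<dots> \<le> card W1 + card (W2 - S2)" by (rule card_Un_le)
      finally show ?thesis using False card_W out2 by linarith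
    next
      case True
      then have "c < r1" by linarith
      obtain S1 where S1: "S1 = A \<or> S1 = B" "grid_minor_side \<mu>1 r1 r1 c S1"
        using grid_minor_side_exists[OF mm1 part finite_grid_V, folded c_def, OF \<open>c < r1\<close> \<open>c < r1\<close>]
        by blast
      have out1: "card (W1 - S1) \<le> c"
        unfolding W1_def by (rule card_first_row_image_diff_le[OF S1(2) q1])
      have "S1 = S2"
        using True \<open>r1 \<le> r2\<close> S1 S2 unfolding c_def
        by (intro grid_minor_sides_agree[OF mm1 mm2 part]) simp_all
      then have "card (W1 \<union> W2 - S2) \<le> card ((W1 - S1) \<union> (W2 - S2))"
        using fin by (intro card_mono) auto
      also have "\<dots> \<le> card (W1 - S1) + card (W2 - S2)" by (rule card_Un_le)
      finally show ?thesis using out1 out2 by linarith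
    qed
    then show ?thesis using min_le[OF S2(1)] by linarith
  qed
  then show ?thesis unfolding c_def W1_def W2_def .
qed

theorem lemma10:
  fixes r l r1 r2 :: nat
    and \<mu>1 \<mu>2 :: "nat \<times> nat \<Rightarrow> (nat \<times> nat) set"
    and q1 q2 :: "nat \<times> nat \<Rightarrow> nat \<times> nat"
  assumes "r1 \<le> r2"
    and "minor_map (grid_V r1 r1) grid_adj (grid_V r l) grid_adj \<mu>1"
    and "minor_map (grid_V r2 r2) grid_adj (grid_V r l) grid_adj \<mu>2"
    and "(\<Union>v\<in>grid_V r1 r1. \<mu>1 v) \<inter> (\<Union>v\<in>grid_V r2 r2. \<mu>2 v) = {}"
    and "\<forall>v\<in>grid_first_row r1. q1 v \<in> \<mu>1 v"
    and "\<forall>v\<in>grid_first_row r2. q2 v \<in> \<mu>2 v"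
  shows "cut_linked (grid_V r l) grid_adj (1/384)
           (q1 ` grid_first_row r1 \<union> q2 ` grid_first_row r2)"
  unfolding cut_linked_def
proof (intro conjI allI impI)
  show "q1 ` grid_first_row r1 \<union> q2 ` grid_first_row r2 \<subseteq> grid_V r l"
    using first_row_representatives_subset[OF assms(2,5)]
      first_row_representatives_subset[OF assms(3,6)] by blast
next
  fix A B assume "A \<union> B = grid_V r l \<and> A \<inter> B = {}"
  then have "min (card (A \<inter> (q1 ` grid_first_row r1 \<union> q2 ` grid_first_row r2)))
      (card (B \<inter> (q1 ` grid_first_row r1 \<union> q2 ` grid_first_row r2))) \<le> 4 * cut_edges grid_adj A B"
    using first_rows_cut_bound[OF assms(1-3,5,6)] by blast
  then show "1 / 384 * real (min (card (A \<inter> (q1 ` grid_first_row r1 \<union> q2 ` grid_first_row r2)))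
      (card (B \<inter> (q1 ` grid_first_row r1 \<union> q2 ` grid_first_row r2))))
    \<le> real (cut_edges grid_adj A B)"
    by linarith
qed

end
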